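(* Consider the clock protocol (defined in the context) run by a population of $n$ agents with a fixed constant drip probability $p\in(0,1]$. For each minute index $i$, with very high probability $$t^{0.1}_{\ge i+1}-t^{0.1}_{\ge i}\le 2.11+\tfrac12\ln\!\left(\tfrac1p\right).$$
   Context: Clock protocol: $n$ agents, each with an integer field $\mathtt{minute}$, initially $0$. At each step an ordered pair of distinct agents is chosen uniformly at random to interact; parallel time $t$ corresponds to $tn$ interactions. Transitions: (drip) if both agents have $\mathtt{minute}=i$, then with probability $p$ one of them moves to $\mathtt{minute}=i+1$; (epidemic) if the agents have minutes $j>k$, the agent with minute $k$ sets its minute to $j$. $c_{\ge i}(t)$ is the fraction of agents with $\mathtt{minute}\ge i$ at time $t$, and $t^{0.1}_{\ge i}=\min\{t: c_{\ge i}(t)\ge 0.1\}$. "With very high probability" means with probability $1-n^{-\omega(1)}$ as $n\to\infty$ ($p$ fixed); the execution is considered over polynomially many minutes. *)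

theory Defs
  imports "HOL-Probability.Probability"
begin

text \<open>Configurations of the clock protocol: agents are 0,...,n-1, each has a minute.\<close>
type_synonym config = "nat \<Rightarrow> nat"

text \<open>One interaction between initiator a and responder b; coin is the outcome of the
  drip coin (true with probability p).\<close>
definition interact :: "nat \<Rightarrow> nat \<Rightarrow> bool \<Rightarrow> config \<Rightarrow> config" where
  "interact a b coin m =
     (if m a = m b then (if coin then m(a := Suc (m a)) else m)
      else if m a > m b then m(b := m a) else m(a := m b))"

definition pairs :: "nat \<Rightarrow> (nat \<times> nat) set" where
  "pairs n = {(a, b). a < n \<and> b < n \<and> a \<noteq> b}"

definition step :: "nat \<Rightarrow> real \<Rightarrow> config \<Rightarrow> config pmf" where
  "step n p m =
     do { (a, b) \<leftarrow> pmf_of_set (pairs n);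
          coin \<leftarrow> bernoulli_pmf p;
          return_pmf (interact a b coin m) }"

fun run :: "nat \<Rightarrow> real \<Rightarrow> nat \<Rightarrow> config list pmf" where
  "run n p 0 = return_pmf [(\<lambda>_. 0)]"
| "run n p (Suc k) =
     do { xs \<leftarrow> run n p k; m' \<leftarrow> step n p (last xs); return_pmf (xs @ [m']) }"

text \<open>c_{>=i} >= 0.1: at least a 0.1 fraction of the n agents have minute >= i.\<close>
definition frac_ge :: "nat \<Rightarrow> nat \<Rightarrow> config \<Rightarrow> bool" where
  "frac_ge n i m \<longleftrightarrow> 10 * card {a. a < n \<and> i \<le> m a} \<ge> n"

text \<open>Interaction k is the first one at which c_{>=i} >= 0.1 (so t^{0.1}_{>=i} = k/n).\<close>
definition first_hit :: "nat \<Rightarrow> nat \<Rightarrow> config list \<Rightarrow> nat \<Rightarrow> bool" where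
  "first_hit n i xs k \<longleftrightarrow> k < length xs \<and> frac_ge n i (xs ! k) \<and>
      (\<forall>j<k. \<not> frac_ge n i (xs ! j))"

text \<open>Failure event, restricted to t^{0.1}_{>=i} <= N/n: t^{0.1}_{>=i} is reached at some
  interaction k <= N but t^{0.1}_{>=i+1} - t^{0.1}_{>=i} > c, i.e. c_{>=i+1} does not reach 0.1
  within the next c*n interactions.\<close>
definition gap_fail :: "nat \<Rightarrow> nat \<Rightarrow> real \<Rightarrow> nat \<Rightarrow> config list \<Rightarrow> bool" where
  "gap_fail n i c N xs \<longleftrightarrow>
     (\<exists>k\<le>N. first_hit n i xs k \<and>
        \<not> (\<exists>k'. k' < length xs \<and> real k' \<le> real k + c * real n \<and> frac_ge n (Suc i) (xs ! k')))"

text \<open>Number of interactions needed to decide the failure event up to horizon N.\<close>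
definition horizon :: "nat \<Rightarrow> real \<Rightarrow> nat \<Rightarrow> nat" where
  "horizon n c N = N + nat \<lceil>c * real n\<rceil> + 1"

end

theory Submission
  imports Defs "HOL-Real_Asymp.Real_Asymp"
begin

text \<open>
  Once a tenth of the agents have minute at least \<open>i\<close>, the argument follows two phases.
  First minute \<open>i\<close> spreads by epidemic until half of the agents have it, which takes about
  \<open>(n/2) ln 10\<close> interactions. Then the many agents at minute exactly \<open>i\<close> meet each other
  at rate \<open>\<Theta>(p)\<close> and drip to \<open>i + 1\<close>, while minute \<open>i + 1\<close> spreads by epidemic, so a tenth
  of the agents reach it after about \<open>(n/2) ln ((6/5) (1 + 8/(5p))) + 8/p\<close> more interactions.

  In both phases a counter of agents climbs through levels and leaves level \<open>j\<close> with
  probability at least \<open>1 / d j\<close> per interaction. If \<open>W k\<close> is the expected time to reach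
  level \<open>k\<close>, then \<open>exp (- \<mu> W k)\<close> shrinks in expectation by the factor \<open>1 - \<mu> + \<mu>\<^sup>2 D\<close> per
  interaction, so running a phase for \<open>1 + \<eta>\<close> times its expected length fails only with
  probability \<open>exp (- \<Theta>(n))\<close>. Both phases fit into \<open>(2.11 + ln (1/p) / 2) n\<close> interactions,
  and a union bound over the first time at which \<open>c\<^sub>\<ge>\<^sub>i\<close> reaches 0.1, together with the
  Markov property of the trajectory, gives the theorem.
\<close>

section \<open>Hitting times of monotone counters\<close>

fun kernel_iter :: "('a \<Rightarrow> 'a pmf) \<Rightarrow> nat \<Rightarrow> 'a \<Rightarrow> 'a pmf" where
  "kernel_iter K 0 s = return_pmf s"
| "kernel_iter K (Suc m) s = kernel_iter K m s \<bind> K"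

lemma kernel_iter_add: "kernel_iter K (a + b) s = kernel_iter K a s \<bind> kernel_iter K b"
  by (induction b) (simp_all add: bind_return_pmf' bind_assoc_pmf)

lemma set_pmf_kernel_iter_subset:
  assumes "\<And>s. s \<in> S \<Longrightarrow> set_pmf (K s) \<subseteq> S" "s \<in> S"
  shows "set_pmf (kernel_iter K m s) \<subseteq> S"
  using assms by (induction m) auto

lemma nn_integral_kernel_iter_le:
  assumes closed: "\<And>s. s \<in> S \<Longrightarrow> set_pmf (K s) \<subseteq> S"
    and super: "\<And>s. s \<in> S \<Longrightarrow> (\<integral>\<^sup>+s'. g s' \<partial>K s) \<le> ennreal r * g s"
    and "s \<in> S"
  shows "(\<integral>\<^sup>+s'. g s' \<partial>kernel_iter K m s) \<le> ennreal r ^ m * g s"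
proof (induction m)
  case (Suc m)
  have "(\<integral>\<^sup>+s'. g s' \<partial>kernel_iter K (Suc m) s) = (\<integral>\<^sup>+x. (\<integral>\<^sup>+s'. g s' \<partial>K x) \<partial>kernel_iter K m s)"
    by simp
  also have "\<dots> \<le> (\<integral>\<^sup>+x. ennreal r * g x \<partial>kernel_iter K m s)"
  proof (intro nn_integral_mono_AE, unfold AE_measure_pmf_iff, intro ballI)
    fix x assume "x \<in> set_pmf (kernel_iter K m s)"
    then have "x \<in> S" using set_pmf_kernel_iter_subset[where K=K and m=m] closed \<open>s \<in> S\<close> by auto
    then show "(\<integral>\<^sup>+s'. g s' \<partial>K x) \<le> ennreal r * g x" by (rule super)
  qed
  also have "\<dots> = ennreal r * (\<integral>\<^sup>+x. g x \<partial>kernel_iter K m s)"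
    by (rule nn_integral_cmult) simp
  also have "\<dots> \<le> ennreal r * (ennreal r ^ m * g s)"
    by (rule mult_left_mono[OF Suc]) simp
  finally show ?case by (simp add: mult.assoc)
qed simp

lemma one_minus_exp_minus_ge:
  fixes x :: real
  assumes "0 \<le> x"
  shows "x - x\<^sup>2 \<le> 1 - exp (- x)"
proof -
  have "exp (- x) \<le> 1 / (1 + x)"
    using exp_ge_add_one_self[of x] assms by (simp add: exp_minus field_simps)
  also have "\<dots> \<le> 1 - x + x\<^sup>2"
    using assms by (simp add: field_simps power2_eq_square power3_eq_cube add_nonneg_nonneg)
  finally show ?thesis by simp
qed

definition level_potential :: "real \<Rightarrow> (nat \<Rightarrow> real) \<Rightarrow> nat \<Rightarrow> nat \<Rightarrow> nat \<Rightarrow> real" where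
  "level_potential \<mu> d L T k = (if k < T then exp (- \<mu> * (\<Sum>j=L..<k. d j)) else 0)"

lemma level_potential_antimono:
  assumes "0 \<le> \<mu>" "\<And>j. L \<le> j \<Longrightarrow> j < T \<Longrightarrow> 0 \<le> d j" "k \<le> k'"
  shows "level_potential \<mu> d L T k' \<le> level_potential \<mu> d L T k"
proof (cases "k' < T")
  case True
  have "(\<Sum>j=L..<k. d j) \<le> (\<Sum>j=L..<k'. d j)"
    using assms True by (intro sum_mono2) auto
  then show ?thesis
    using True assms by (simp add: level_potential_def mult_left_mono)
qed (simp add: level_potential_def)

lemma level_potential_le_one:
  assumes "0 \<le> \<mu>" "\<And>j. L \<le> j \<Longrightarrow> j < T \<Longrightarrow> 0 \<le> d j"
  shows "level_potential \<mu> d L T k \<le> 1"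
proof -
  have "level_potential \<mu> d L T k \<le> level_potential \<mu> d L T 0"
    using assms by (intro level_potential_antimono) auto
  then show ?thesis by (simp add: level_potential_def split: if_splits)
qed

lemma one_le_level_potential_scaled:
  assumes "0 \<le> \<mu>" "\<And>j. L \<le> j \<Longrightarrow> j < T \<Longrightarrow> 0 \<le> d j" "k < T"
  shows "1 \<le> exp (\<mu> * (\<Sum>j=L..<T. d j)) * level_potential \<mu> d L T k"
proof -
  have "(\<Sum>j=L..<k. d j) \<le> (\<Sum>j=L..<T. d j)"
    using assms by (intro sum_mono2) auto
  then show ?thesis
    using assms by (simp add: level_potential_def mult_left_mono flip: exp_add)
qed

lemma exp_potential_step_le:
  fixes A q d D \<mu> :: real
  assumes "0 < A" "0 < \<mu>" "0 < d" "d \<le> D" "1 / d \<le> q"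
  shows "A * exp (- (\<mu> * d)) + (A - A * exp (- (\<mu> * d))) * (1 - q) \<le> (1 - \<mu> + \<mu>\<^sup>2 * D) * A"
proof -
  define E where "E = 1 - exp (- (\<mu> * d))"
  have E0: "0 \<le> E" using assms by (simp add: E_def)
  have "\<mu> - \<mu>\<^sup>2 * D \<le> \<mu> - \<mu>\<^sup>2 * d"
    using assms by (simp add: mult_left_mono)
  also have "\<dots> = (\<mu> * d - (\<mu> * d)\<^sup>2) / d"
    using assms by (simp add: field_simps power2_eq_square)
  also have "\<dots> \<le> E / d"
    using one_minus_exp_minus_ge[of "\<mu> * d"] assms by (simp add: E_def divide_right_mono)
  also have "\<dots> \<le> E * q"
    using mult_left_mono[OF assms(5) E0] by simp
  finally have "A * (\<mu> - \<mu>\<^sup>2 * D) \<le> A * (E * q)"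
    using assms by (simp add: mult_left_mono)
  then show ?thesis by (simp add: E_def algebra_simps)
qed

lemma nn_integral_pmf_two_level_le:
  fixes A B :: real
  assumes "0 \<le> B" "B \<le> A"
    and "\<And>x. x \<in> set_pmf M \<Longrightarrow> x \<in> E \<Longrightarrow> g x \<le> B"
    and "\<And>x. x \<in> set_pmf M \<Longrightarrow> g x \<le> A"
  shows "(\<integral>\<^sup>+x. ennreal (g x) \<partial>M) \<le> ennreal (B + (A - B) * (1 - measure_pmf.prob M E))"
proof -
  have "(\<integral>\<^sup>+x. ennreal (g x) \<partial>M) \<le> (\<integral>\<^sup>+x. ennreal B + ennreal (A - B) * indicator (- E) x \<partial>M)"
  proof (intro nn_integral_mono_AE, unfold AE_measure_pmf_iff, intro ballI)
    fix x assume "x \<in> set_pmf M"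
    then show "ennreal (g x) \<le> ennreal B + ennreal (A - B) * indicator (- E) x"
      using assms by (cases "x \<in> E") (auto intro: ennreal_leI simp flip: ennreal_plus)
  qed
  also have "\<dots> = ennreal B + ennreal (A - B) * emeasure M (- E)"
    by (subst nn_integral_add) (auto simp: nn_integral_cmult_indicator)
  also have "emeasure M (- E) = ennreal (1 - measure_pmf.prob M E)"
    using measure_pmf.prob_compl[of E M]
    by (simp add: measure_pmf.emeasure_eq_measure Compl_eq_Diff_UNIV)
  also have "ennreal B + ennreal (A - B) * ennreal (1 - measure_pmf.prob M E)
      = ennreal (B + (A - B) * (1 - measure_pmf.prob M E))"
    using assms(1,2) by (simp add: ennreal_plus ennreal_mult' measure_pmf.prob_le_1)
  finally show ?thesis .
qed

lemma nn_integral_level_potential_le: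
  fixes f :: "'a \<Rightarrow> nat" and d :: "nat \<Rightarrow> real"
  assumes mono: "\<And>s'. s' \<in> set_pmf M \<Longrightarrow> f s \<le> f s'"
    and rate: "f s < T \<Longrightarrow> 1 / d (f s) \<le> measure_pmf.prob M {s'. f s < f s'}"
    and d: "\<And>j. L \<le> j \<Longrightarrow> j < T \<Longrightarrow> 0 < d j \<and> d j \<le> D"
    and "L \<le> f s" "0 < \<mu>"
  shows "(\<integral>\<^sup>+s'. level_potential \<mu> d L T (f s') \<partial>M)
    \<le> ennreal ((1 - \<mu> + \<mu>\<^sup>2 * D) * level_potential \<mu> d L T (f s))"
proof (cases "f s < T")
  case False
  then have "(\<integral>\<^sup>+s'. level_potential \<mu> d L T (f s') \<partial>M) = (\<integral>\<^sup>+s'. 0 \<partial>M)"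
    using mono by (intro nn_integral_cong_AE) (force simp: AE_measure_pmf_iff level_potential_def)
  then show ?thesis by simp
next
  case True
  define A where "A = level_potential \<mu> d L T (f s)"
  define B where "B = A * exp (- (\<mu> * d (f s)))"
  have d_fs: "0 < d (f s)" "d (f s) \<le> D" using d \<open>L \<le> f s\<close> True by auto
  have d0: "0 \<le> d j" if "L \<le> j" "j < T" for j using d[OF that] by simp
  have "0 < A" using True by (simp add: A_def level_potential_def)
  have "(\<integral>\<^sup>+s'. level_potential \<mu> d L T (f s') \<partial>M)
      \<le> ennreal (B + (A - B) * (1 - measure_pmf.prob M {s'. f s < f s'}))"
  proof (rule nn_integral_pmf_two_level_le)
    show "0 \<le> B" "B \<le> A" using \<open>0 < A\<close> d_fs \<open>0 < \<mu>\<close> by (simp_all add: B_def)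
    show "level_potential \<mu> d L T (f s') \<le> A" if "s' \<in> set_pmf M" for s'
      using that mono d0 \<open>0 < \<mu>\<close> unfolding A_def by (intro level_potential_antimono) auto
    show "level_potential \<mu> d L T (f s') \<le> B" if "s' \<in> {s'. f s < f s'}" for s'
    proof -
      have "level_potential \<mu> d L T (f s') \<le> level_potential \<mu> d L T (Suc (f s))"
        using that d0 \<open>0 < \<mu>\<close> by (intro level_potential_antimono) auto
      also have "\<dots> \<le> B"
        using \<open>L \<le> f s\<close> by (simp add: level_potential_def A_def B_def algebra_simps flip: exp_add)
      finally show ?thesis .
    qed
  qed
  also have "B + (A - B) * (1 - measure_pmf.prob M {s'. f s < f s'}) \<le> (1 - \<mu> + \<mu>\<^sup>2 * D) * A"
    unfolding B_def using exp_potential_step_le \<open>0 < A\<close> \<open>0 < \<mu>\<close> d_fs rate True by simp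
  finally show ?thesis by (simp add: A_def ennreal_leI)
qed

lemma kernel_iter_level_hitting_exp:
  fixes f :: "'a \<Rightarrow> nat" and d :: "nat \<Rightarrow> real"
  assumes closed: "\<And>s. s \<in> S \<Longrightarrow> set_pmf (K s) \<subseteq> S"
    and mono: "\<And>s s'. s \<in> S \<Longrightarrow> s' \<in> set_pmf (K s) \<Longrightarrow> f s \<le> f s'"
    and low: "\<And>s. s \<in> S \<Longrightarrow> L \<le> f s"
    and rate: "\<And>s. s \<in> S \<Longrightarrow> f s < T \<Longrightarrow> 1 / d (f s) \<le> measure_pmf.prob (K s) {s'. f s < f s'}"
    and d: "\<And>j. L \<le> j \<Longrightarrow> j < T \<Longrightarrow> 0 < d j \<and> d j \<le> D"
    and \<mu>: "0 < \<mu>" "\<mu> \<le> 1" and "0 \<le> D" and "s0 \<in> S"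
  shows "emeasure (kernel_iter K m s0) {s. f s < T}
    \<le> ennreal (exp (\<mu> * (\<Sum>j=L..<T. d j)) * (1 - \<mu> + \<mu>\<^sup>2 * D) ^ m)"
proof -
  define r where "r = 1 - \<mu> + \<mu>\<^sup>2 * D"
  define c where "c = exp (\<mu> * (\<Sum>j=L..<T. d j))"
  define g where "g s = ennreal (level_potential \<mu> d L T (f s))" for s
  have r0: "0 \<le> r" using \<mu> \<open>0 \<le> D\<close> by (simp add: r_def)
  have d0: "\<And>j. L \<le> j \<Longrightarrow> j < T \<Longrightarrow> 0 \<le> d j" using d by (simp add: less_imp_le)
  have indicator_le: "indicator {s. f s < T} s \<le> ennreal c * g s" for s
  proof (cases "f s < T")
    case True
    then have "ennreal 1 \<le> ennreal (c * level_potential \<mu> d L T (f s))"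
      unfolding c_def using \<mu> d0 by (intro ennreal_leI one_le_level_potential_scaled) auto
    then show ?thesis using True by (simp add: g_def c_def ennreal_mult')
  qed simp
  have "g s0 \<le> 1"
    using level_potential_le_one[of \<mu> L T d "f s0"] d0 \<mu> by (simp add: g_def)
  have "emeasure (kernel_iter K m s0) {s. f s < T}
      = (\<integral>\<^sup>+s. indicator {s. f s < T} s \<partial>kernel_iter K m s0)"
    by simp
  also have "\<dots> \<le> (\<integral>\<^sup>+s. ennreal c * g s \<partial>kernel_iter K m s0)"
    by (intro nn_integral_mono indicator_le)
  also have "\<dots> = ennreal c * (\<integral>\<^sup>+s. g s \<partial>kernel_iter K m s0)"
    by (rule nn_integral_cmult) simp
  also have "\<dots> \<le> ennreal c * (ennreal r ^ m * g s0)"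
  proof (intro mult_left_mono nn_integral_kernel_iter_le[where S = S])
    fix s assume "s \<in> S"
    then show "(\<integral>\<^sup>+s'. g s' \<partial>K s) \<le> ennreal r * g s"
      unfolding g_def r_def ennreal_mult'[OF r0[unfolded r_def], symmetric]
      using mono rate d low \<mu> by (intro nn_integral_level_potential_le) auto
  qed (use closed \<open>s0 \<in> S\<close> in auto)
  also have "\<dots> \<le> ennreal c * (ennreal r ^ m * 1)"
    using \<open>g s0 \<le> 1\<close> by (intro mult_left_mono) auto
  finally show ?thesis using r0 by (simp add: c_def r_def ennreal_mult ennreal_power)
qed

lemma kernel_iter_level_hitting_tail:
  fixes f :: "'a \<Rightarrow> nat" and d :: "nat \<Rightarrow> real"
  assumes "\<And>s. s \<in> S \<Longrightarrow> set_pmf (K s) \<subseteq> S"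
    and "\<And>s s'. s \<in> S \<Longrightarrow> s' \<in> set_pmf (K s) \<Longrightarrow> f s \<le> f s'"
    and "\<And>s. s \<in> S \<Longrightarrow> L \<le> f s"
    and "\<And>s. s \<in> S \<Longrightarrow> f s < T \<Longrightarrow> 1 / d (f s) \<le> measure_pmf.prob (K s) {s'. f s < f s'}"
    and "\<And>j. L \<le> j \<Longrightarrow> j < T \<Longrightarrow> 0 < d j \<and> d j \<le> D"
    and "1 \<le> D" "s0 \<in> S" "0 < \<eta>"
    and m: "(1 + \<eta>) * (\<Sum>j=L..<T. d j) \<le> real m"
  shows "emeasure (kernel_iter K m s0) {s. f s < T}
    \<le> ennreal (exp (- real m * \<eta>\<^sup>2 / (4 * (1 + \<eta>)\<^sup>2 * D)))"
proof -
  define \<mu> where "\<mu> = \<eta> / (2 * (1 + \<eta>) * D)"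
  define r where "r = 1 - \<mu> + \<mu>\<^sup>2 * D"
  have "\<eta> \<le> 2 * (1 + \<eta>) * 1" using \<open>0 < \<eta>\<close> by simp
  also have "\<dots> \<le> 2 * (1 + \<eta>) * D" using \<open>0 < \<eta>\<close> \<open>1 \<le> D\<close> by (intro mult_left_mono) auto
  finally have \<mu>: "0 < \<mu>" "\<mu> \<le> 1"
    using \<open>0 < \<eta>\<close> \<open>1 \<le> D\<close> by (simp_all add: \<mu>_def)
  have r0: "0 \<le> r" using \<mu> \<open>1 \<le> D\<close> by (simp add: r_def)
  have "r ^ m \<le> exp (- \<mu> + \<mu>\<^sup>2 * D) ^ m"
    using r0 exp_ge_add_one_self[of "- \<mu> + \<mu>\<^sup>2 * D"] by (intro power_mono) (simp_all add: r_def algebra_simps)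
  also have "\<dots> = exp (real m * (- \<mu> + \<mu>\<^sup>2 * D))"
    by (simp flip: exp_of_nat_mult)
  finally have rm: "r ^ m \<le> exp (real m * (- \<mu> + \<mu>\<^sup>2 * D))" .
  have "\<mu> * (\<Sum>j=L..<T. d j) \<le> \<mu> * (real m / (1 + \<eta>))"
    using m \<mu> \<open>0 < \<eta>\<close> by (intro mult_left_mono) (simp_all add: field_simps)
  then have "exp (\<mu> * (\<Sum>j=L..<T. d j)) * r ^ m
      \<le> exp (\<mu> * (real m / (1 + \<eta>)) + real m * (- \<mu> + \<mu>\<^sup>2 * D))"
    using rm r0 by (simp add: exp_add mult_mono)
  also have "\<mu> * (real m / (1 + \<eta>)) + real m * (- \<mu> + \<mu>\<^sup>2 * D)
      = - real m * \<eta>\<^sup>2 / (4 * (1 + \<eta>)\<^sup>2 * D)"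
  proof -
    \<comment> \<open>with \<open>1 + \<eta>\<close> renamed to \<open>e\<close>, \<open>field_simps\<close> can clear the denominators\<close>
    obtain e where e: "\<eta> = e - 1" "0 < e" using \<open>0 < \<eta>\<close> by (intro that[of "1 + \<eta>"]) auto
    have "D \<noteq> 0" using \<open>1 \<le> D\<close> by auto
    with e show ?thesis by (simp add: \<mu>_def field_simps power2_eq_square) (simp add: e(1) algebra_simps)
  qed
  finally have "exp (\<mu> * (\<Sum>j=L..<T. d j)) * r ^ m \<le> exp (- real m * \<eta>\<^sup>2 / (4 * (1 + \<eta>)\<^sup>2 * D))" .
  moreover have "emeasure (kernel_iter K m s0) {s. f s < T}
      \<le> ennreal (exp (\<mu> * (\<Sum>j=L..<T. d j)) * r ^ m)"
    unfolding r_def using assms \<mu> by (intro kernel_iter_level_hitting_exp[where S = S]) auto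
  ultimately show ?thesis by (meson ennreal_leI order_trans)
qed

definition agents_ge :: "nat \<Rightarrow> nat \<Rightarrow> config \<Rightarrow> nat set" where
  "agents_ge n i s = {a. a < n \<and> i \<le> s a}"

definition count_ge :: "nat \<Rightarrow> nat \<Rightarrow> config \<Rightarrow> nat" where
  "count_ge n i s = card (agents_ge n i s)"

lemma frac_ge_iff_count_ge: "frac_ge n i s \<longleftrightarrow> n \<le> 10 * count_ge n i s"
  by (simp add: frac_ge_def count_ge_def agents_ge_def)

lemma agents_ge_subset: "agents_ge n i s \<subseteq> {..<n}"
  by (auto simp: agents_ge_def)

lemma finite_agents_ge [simp]: "finite (agents_ge n i s)"
  by (rule finite_subset[OF agents_ge_subset]) simp

lemma count_ge_le: "count_ge n i s \<le> n"
  using card_mono[OF _ agents_ge_subset] by (simp add: count_ge_def)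

lemma count_ge_Suc_le: "count_ge n (Suc i) s \<le> count_ge n i s"
  unfolding count_ge_def agents_ge_def by (rule card_mono) auto

lemma count_ge_mono: "(\<And>a. s a \<le> s' a) \<Longrightarrow> count_ge n i s \<le> count_ge n i s'"
  unfolding count_ge_def agents_ge_def by (rule card_mono) (auto intro: order_trans)

lemma count_ge_less:
  assumes "\<And>a. s a \<le> s' a" "b < n" "s b < i" "i \<le> s' b"
  shows "count_ge n i s < count_ge n i s'"
proof -
  have "agents_ge n i s \<subseteq> agents_ge n i s'"
    using assms(1) by (auto simp: agents_ge_def intro: order_trans)
  moreover have "b \<in> agents_ge n i s' - agents_ge n i s"
    using assms by (simp add: agents_ge_def)
  ultimately have "agents_ge n i s \<subset> agents_ge n i s'" by blast
  then show ?thesis unfolding count_ge_def by (simp add: psubset_card_mono)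
qed

lemma card_Times_Un_Times_swap:
  assumes "finite G" "finite H" "G \<inter> H = {}"
  shows "card (G \<times> H \<union> H \<times> G) = 2 * card G * card H"
  using assms by (subst card_Un_disjoint) (auto simp: card_cartesian_product)

lemma card_offdiag:
  assumes "finite I"
  shows "card {(a, b). a \<in> I \<and> b \<in> I \<and> a \<noteq> b} = card I * (card I - 1)"
proof -
  have "{(a, b). a \<in> I \<and> b \<in> I \<and> a \<noteq> b} = I \<times> I - (\<lambda>a. (a, a)) ` I" by auto
  moreover have "card (I \<times> I - (\<lambda>a. (a, a)) ` I) = card (I \<times> I) - card ((\<lambda>a. (a, a)) ` I)"
    using assms by (intro card_Diff_subset) auto
  moreover have "card ((\<lambda>a. (a, a)) ` I) = card I" by (simp add: card_image inj_on_def)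
  ultimately show ?thesis by (simp add: card_cartesian_product diff_mult_distrib2)
qed

lemma card_pairs: "card (pairs n) = n * (n - 1)"
proof -
  have "pairs n = {(a, b). a \<in> {..<n} \<and> b \<in> {..<n} \<and> a \<noteq> b}"
    by (auto simp: pairs_def)
  then show ?thesis by (simp only: card_offdiag[of "{..<n}"] finite_lessThan card_lessThan)
qed

lemma interact_ge: "s x \<le> interact a b coin s x"
  by (auto simp: interact_def)

lemma step_ge: "s' \<in> set_pmf (step n p s) \<Longrightarrow> s x \<le> s' x"
  by (auto simp: step_def interact_ge split: prod.splits)

lemma count_ge_step_mono: "s' \<in> set_pmf (step n p s) \<Longrightarrow> count_ge n i s \<le> count_ge n i s'"
  by (intro count_ge_mono) (erule step_ge)

section \<open>Rates of a single interaction\<close>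

lemma prob_step_ge:
  fixes p :: real
  assumes n: "2 \<le> n" and p: "0 \<le> p" "p \<le> 1"
    and E: "E1 \<subseteq> pairs n" "E2 \<subseteq> pairs n" "E1 \<inter> E2 = {}"
    and E1: "\<And>a b coin. (a, b) \<in> E1 \<Longrightarrow> interact a b coin s \<in> A"
    and E2: "\<And>a b. (a, b) \<in> E2 \<Longrightarrow> interact a b True s \<in> A"
  shows "(card E1 + p * card E2) / (n * (n - 1)) \<le> measure_pmf.prob (step n p s) A"
proof -
  define h where "h x = indicator E1 x + p * indicator E2 x" for x :: "nat \<times> nat"
  have fin: "finite (pairs n)" "pairs n \<noteq> {}"
    using card_pairs[of n] n by (auto intro: card_ge_0_finite)
  have pair_ge: "ennreal (h (a, b))
      \<le> emeasure (measure_pmf (bernoulli_pmf p \<bind> (\<lambda>coin. return_pmf (interact a b coin s)))) A" for a b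
  proof -
    have "emeasure (measure_pmf (bernoulli_pmf p \<bind> (\<lambda>coin. return_pmf (interact a b coin s)))) A
        = indicator A (interact a b True s) * ennreal p
          + indicator A (interact a b False s) * ennreal (1 - p)"
      using p by (simp add: indicator_def)
    moreover have "ennreal (h (a, b)) \<le> indicator A (interact a b True s) * ennreal p
        + indicator A (interact a b False s) * ennreal (1 - p)"
      using E E1[of a b] E2[of a b] p
      by (cases "(a, b) \<in> E1"; cases "(a, b) \<in> E2") (auto simp: h_def simp flip: ennreal_plus)
    ultimately show ?thesis by simp
  qed
  have "(\<Sum>x\<in>pairs n. h x) = card E1 + p * card E2"
    using E fin by (simp add: h_def sum.distrib flip: sum_distrib_left)
      (simp add: indicator_def sum.If_cases Int_absorb1)
  moreover have "emeasure (measure_pmf (step n p s)) A = (\<Sum>x\<in>pairs n. emeasure (measure_pmf (case x of (a, b) \<Rightarrow>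
      bernoulli_pmf p \<bind> (\<lambda>coin. return_pmf (interact a b coin s)))) A) / card (pairs n)"
    unfolding step_def emeasure_bind_pmf using fin
    by (subst nn_integral_pmf_of_set) (auto simp: case_prod_unfold)
  moreover have "\<dots> \<ge> (\<Sum>x\<in>pairs n. ennreal (h x)) / card (pairs n)"
    using pair_ge by (intro divide_right_mono_ennreal sum_mono) (auto split: prod.splits)
  moreover have "0 \<le> h x" for x using p by (simp add: h_def)
  ultimately have "ennreal (card E1 + p * card E2) / ennreal (card (pairs n))
      \<le> ennreal (measure_pmf.prob (step n p s) A)"
    by (simp add: measure_pmf.emeasure_eq_measure ennreal_of_nat_eq_real_of_nat sum_nonneg)
  moreover have "ennreal (card E1 + p * card E2) / ennreal (card (pairs n))
      = ennreal ((card E1 + p * card E2) / card (pairs n))"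
    using fin p by (intro divide_ennreal) (auto simp: card_gt_0_iff)
  ultimately show ?thesis
    using n by (simp add: ennreal_le_iff card_pairs of_nat_diff)
qed

definition crossing_pairs :: "nat \<Rightarrow> nat \<Rightarrow> config \<Rightarrow> (nat \<times> nat) set" where
  "crossing_pairs n i s =
     agents_ge n i s \<times> ({..<n} - agents_ge n i s) \<union> ({..<n} - agents_ge n i s) \<times> agents_ge n i s"

definition drip_pairs :: "nat \<Rightarrow> nat \<Rightarrow> config \<Rightarrow> (nat \<times> nat) set" where
  "drip_pairs n i s = {(a, b). a < n \<and> b < n \<and> a \<noteq> b \<and> s a = i \<and> s b = i}"

lemma crossing_pairs_subset: "crossing_pairs n i s \<subseteq> pairs n"
  by (auto simp: crossing_pairs_def pairs_def agents_ge_def)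

lemma card_crossing_pairs:
  "card (crossing_pairs n i s) = 2 * count_ge n i s * (n - count_ge n i s)"
proof -
  have "card ({..<n} - agents_ge n i s) = n - count_ge n i s"
    by (simp add: card_Diff_subset agents_ge_subset count_ge_def)
  then show ?thesis
    unfolding crossing_pairs_def by (subst card_Times_Un_Times_swap) (auto simp: count_ge_def)
qed

lemma count_ge_interact_crossing:
  assumes "(a, b) \<in> crossing_pairs n i s"
  shows "count_ge n i s < count_ge n i (interact a b coin s)"
proof -
  consider "a < n" "b < n" "i \<le> s a" "s b < i" | "a < n" "b < n" "s a < i" "i \<le> s b"
    using assms by (auto simp: crossing_pairs_def agents_ge_def)
  then show ?thesis
  proof cases
    case 1
    then show ?thesis by (intro count_ge_less[of _ _ b] interact_ge) (auto simp: interact_def)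
  next
    case 2
    then show ?thesis by (intro count_ge_less[of _ _ a] interact_ge) (auto simp: interact_def)
  qed
qed

lemma drip_pairs_subset: "drip_pairs n i s \<subseteq> pairs n"
  by (auto simp: drip_pairs_def pairs_def)

lemma drip_pairs_crossing_pairs_disjoint: "crossing_pairs n (Suc i) s \<inter> drip_pairs n i s = {}"
  by (auto simp: crossing_pairs_def drip_pairs_def agents_ge_def)

lemma card_drip_pairs:
  "card (drip_pairs n i s) = (count_ge n i s - count_ge n (Suc i) s) * (count_ge n i s - count_ge n (Suc i) s - 1)"
proof -
  define I where "I = agents_ge n i s - agents_ge n (Suc i) s"
  have "drip_pairs n i s = {(a, b). a \<in> I \<and> b \<in> I \<and> a \<noteq> b}"
    by (auto simp: drip_pairs_def I_def agents_ge_def)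
  moreover have "card I = count_ge n i s - count_ge n (Suc i) s"
    unfolding I_def count_ge_def by (rule card_Diff_subset) (auto simp: agents_ge_def)
  ultimately show ?thesis using card_offdiag[of I] by (simp add: I_def)
qed

lemma count_ge_Suc_interact_drip:
  assumes "(a, b) \<in> drip_pairs n i s"
  shows "count_ge n (Suc i) s < count_ge n (Suc i) (interact a b True s)"
  using assms by (intro count_ge_less[of _ _ a] interact_ge) (auto simp: drip_pairs_def interact_def)

lemma prob_step_count_ge_less:
  fixes p :: real
  assumes "2 \<le> n" "0 \<le> p" "p \<le> 1"
  shows "real (2 * count_ge n i s * (n - count_ge n i s)) / (real n * (real n - 1))
    \<le> measure_pmf.prob (step n p s) {s'. count_ge n i s < count_ge n i s'}"
  using prob_step_ge[OF assms crossing_pairs_subset, of "{}"] count_ge_interact_crossing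
  by (simp add: card_crossing_pairs)

lemma prob_step_count_ge_Suc_less:
  fixes p :: real
  assumes "2 \<le> n" "0 \<le> p" "p \<le> 1"
  shows "(real (2 * count_ge n (Suc i) s * (n - count_ge n (Suc i) s))
      + p * real ((count_ge n i s - count_ge n (Suc i) s) * (count_ge n i s - count_ge n (Suc i) s - 1)))
      / (real n * (real n - 1))
    \<le> measure_pmf.prob (step n p s) {s'. count_ge n (Suc i) s < count_ge n (Suc i) s'}"
  using prob_step_ge[OF assms crossing_pairs_subset drip_pairs_subset drip_pairs_crossing_pairs_disjoint]
    count_ge_interact_crossing count_ge_Suc_interact_drip
  by (simp add: card_crossing_pairs card_drip_pairs)

lemma prob_step_epidemic_ge:
  fixes p :: real
  assumes "2 \<le> n" "0 \<le> p" "p \<le> 1"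
  shows "2 * real (count_ge n i s) * (real n - real (count_ge n i s)) / (real n)\<^sup>2
    \<le> measure_pmf.prob (step n p s) {s'. count_ge n i s < count_ge n i s'}"
proof -
  define k N where "k = count_ge n i s" and "N = real n"
  have "k \<le> n" using count_ge_le by (simp add: k_def)
  have "2 * real k * (N - real k) / N\<^sup>2 \<le> 2 * real k * (N - real k) / (N * (N - 1))"
    using \<open>k \<le> n\<close> assms by (intro divide_left_mono) (auto simp: N_def power2_eq_square)
  also have "\<dots> \<le> measure_pmf.prob (step n p s) {s'. k < count_ge n i s'}"
    using prob_step_count_ge_less[OF assms, of i s] \<open>k \<le> n\<close> by (simp add: k_def N_def of_nat_diff)
  finally show ?thesis by (simp add: k_def N_def)
qed

text \<open>The drips among the at least \<open>2n/5\<close> agents at minute exactly \<open>i\<close> act like \<open>p n / 16\<close>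
  additional agents at minute \<open>i + 1\<close> in the epidemic.\<close>
lemma prob_step_drip_ge:
  fixes p :: real
  assumes n: "200 \<le> n" and p: "0 < p" "p \<le> 1"
    and half: "n \<le> 2 * count_ge n i s" and "10 * count_ge n (Suc i) s < n"
  shows "2 * (real (count_ge n (Suc i) s) + p * real n / 16) * (real n - real (count_ge n (Suc i) s))
      / (real n)\<^sup>2
    \<le> measure_pmf.prob (step n p s) {s'. count_ge n (Suc i) s < count_ge n (Suc i) s'}"
proof -
  define k u N where "k = count_ge n (Suc i) s" and "u = count_ge n i s - k" and "N = real n"
  have k: "10 * real k + 1 \<le> N" "k \<le> count_ge n i s"
    using assms count_ge_Suc_le[of n i s] by (auto simp: k_def N_def)
  have N: "200 \<le> N" and u: "2 * N \<le> 5 * real u"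
    using n half k by (auto simp: u_def N_def of_nat_diff)
  have "2 * (p * N / 16) * (N - real k) \<le> p * (N\<^sup>2 / 8)"
    using p k by (simp add: power2_eq_square mult_left_mono)
  also have "\<dots> \<le> p * (real u * (real u - 1))"
  proof (intro mult_left_mono)
    have "2 * N * (2 * N - 5) \<le> 5 * real u * (5 * real u - 5)"
      by (rule mult_mono) (use u N in auto)
    moreover have "80 * N \<le> 7 * N * N" using mult_right_mono[of 80 "7 * N" N] N by simp
    ultimately show "N\<^sup>2 / 8 \<le> real u * (real u - 1)"
      by (simp add: power2_eq_square algebra_simps)
  qed (use p in simp)
  finally have drip: "2 * (p * N / 16) * (N - real k) \<le> p * (real u * (real u - 1))" .
  have "2 * (real k + p * N / 16) * (N - real k) / N\<^sup>2
      = (2 * real k * (N - real k) + 2 * (p * N / 16) * (N - real k)) / (N * N)"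
    by (simp add: power2_eq_square algebra_simps)
  also have "\<dots> \<le> (2 * real k * (N - real k) + p * (real u * (real u - 1))) / (N * (N - 1))"
  proof (rule frac_le)
    have "0 \<le> 2 * real k * (N - real k)" "0 \<le> 2 * (p * N / 16) * (N - real k)" using k p by auto
    then show "0 \<le> 2 * real k * (N - real k) + p * (real u * (real u - 1))" using drip by linarith
  qed (use drip N in auto)
  also have "\<dots> \<le> measure_pmf.prob (step n p s) {s'. k < count_ge n (Suc i) s'}"
  proof -
    have "1 \<le> u" "k \<le> n" using u N k count_ge_le[of n i s] by linarith+
    then show ?thesis
      using prob_step_count_ge_Suc_less[of n p i s, folded k_def, folded u_def] n p
      by (simp add: N_def of_nat_diff)
  qed
  finally show ?thesis by (simp add: k_def N_def)
qed

section \<open>Harmonic sums\<close>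

lemma sum_le_telescope:
  fixes x F :: "nat \<Rightarrow> real"
  assumes "a \<le> b" "\<And>k. a \<le> k \<Longrightarrow> k < b \<Longrightarrow> x k \<le> F (Suc k) - F k"
  shows "(\<Sum>k=a..<b. x k) \<le> F b - F a"
proof -
  have "(\<Sum>k=a..<b. x k) \<le> (\<Sum>k=a..<b. F (Suc k) - F k)"
    using assms(2) by (intro sum_mono) auto
  also have "\<dots> = F b - F a"
    using assms(1) by (rule sum_Suc_diff')
  finally show ?thesis .
qed

lemma inverse_le_ln_diff:
  fixes y :: real
  assumes "1 < y"
  shows "1 / y \<le> ln y - ln (y - 1)"
  using ln_diff_le[of "y - 1" y] assms by (simp add: field_simps)

lemma sum_inverse_le_ln:
  fixes c :: real
  assumes "a \<le> b" "1 < real a + c"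
  shows "(\<Sum>j=a..<b. 1 / (real j + c)) \<le> ln (real b + c - 1) - ln (real a + c - 1)"
proof (rule sum_le_telescope[OF assms(1)])
  fix k assume "a \<le> k"
  then have "1 < real k + c" using assms(2) by linarith
  then show "1 / (real k + c) \<le> ln (real (Suc k) + c - 1) - ln (real k + c - 1)"
    using inverse_le_ln_diff by (simp add: algebra_simps)
qed

lemma sum_inverse_diff_le_ln:
  fixes N :: real
  assumes "a \<le> b" "real b < N"
  shows "(\<Sum>j=a..<b. 1 / (N - real j)) \<le> ln (N - real a) - ln (N - real b)"
proof -
  have "(\<Sum>j=a..<b. 1 / (N - real j)) \<le> - ln (N - real b) - - ln (N - real a)"
  proof (rule sum_le_telescope[OF assms(1)])
    fix k assume "k < b"
    then have "1 < N - real k" using assms(2) by linarith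
    then have "1 / (N - real k) \<le> ln (N - real k) - ln (N - real k - 1)"
      by (rule inverse_le_ln_diff)
    then show "1 / (N - real k) \<le> - ln (N - real (Suc k)) - - ln (N - real k)"
      by (simp add: algebra_simps)
  qed
  then show ?thesis by simp
qed

lemma sq_div_le_half_sum_inverse:
  fixes a b N :: real
  assumes "0 < a" "0 < b" "0 \<le> N" "N \<le> a + b"
  shows "N\<^sup>2 / (2 * a * b) \<le> N / 2 * (1 / a + 1 / b)"
proof -
  have "N * N \<le> N * (a + b)" using assms by (intro mult_left_mono) auto
  then show ?thesis using assms by (simp add: field_simps power2_eq_square)
qed

lemma sum_inverse_shift_le_ln:
  fixes c :: real
  assumes "0 < c" "1 \<le> T"
  shows "(\<Sum>j=0..<T. 1 / (real j + c)) \<le> 1 / c + ln (1 + (real T - 1) / c)"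
proof -
  have "(\<Sum>j=0..<T. 1 / (real j + c)) = 1 / c + (\<Sum>j=1..<T. 1 / (real j + c))"
    using assms by (simp add: sum.atLeast_Suc_lessThan[of 0 T])
  also have "(\<Sum>j=1..<T. 1 / (real j + c)) \<le> ln (real T + c - 1) - ln c"
    using sum_inverse_le_ln[OF assms(2), of c] assms by simp
  also have "ln (real T + c - 1) - ln c = ln (1 + (real T - 1) / c)"
  proof -
    have "(real T + c - 1) / c = 1 + (real T - 1) / c" using assms by (simp add: field_simps)
    then show ?thesis using assms by (simp flip: ln_divide_pos)
  qed
  finally show ?thesis by simp
qed

lemma ln_diff_le_ln_ratio:
  fixes x y r :: real
  assumes "0 < x" "0 < y" "x \<le> r * y"
  shows "ln x - ln y \<le> ln r"
proof -
  have "0 < r" using assms by (smt (verit) mult_nonpos_nonneg)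
  then have "ln x \<le> ln r + ln y" using assms by (simp flip: ln_mult_pos)
  then show ?thesis by simp
qed

section \<open>The two phases\<close>

lemma less_ceiling_div_iff:
  fixes c k n :: nat
  assumes "0 < c"
  shows "k < (n + c - 1) div c \<longleftrightarrow> c * k < n"
proof -
  have "k < (n + c - 1) div c \<longleftrightarrow> Suc k * c \<le> n + c - 1"
    using assms by (simp add: Suc_le_eq[symmetric] less_eq_div_iff_mult_less_eq del: mult_Suc)
  also have "\<dots> \<longleftrightarrow> c * k < n"
    using assms by (auto simp: algebra_simps)
  finally show ?thesis .
qed

text \<open>Bounds on the expected numbers of interactions of the two phases.\<close>
definition epidemic_phase_time :: "nat \<Rightarrow> real" where
  "epidemic_phase_time n = real n / 2 * ln 10"

definition drip_phase_time :: "nat \<Rightarrow> real \<Rightarrow> real" where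
  "drip_phase_time n p = real n / 2 * (ln (6/5) + ln (1 + 8 / (5 * p))) + 8 / p"

lemma epidemic_sum_le:
  assumes "100 \<le> n"
  shows "(\<Sum>j=(n+9) div 10..<(n+1) div 2. real n ^ 2 / (2 * real j * (real n - real j)))
    \<le> epidemic_phase_time n"
proof -
  define L T N where "L = (n+9) div 10" and "T = (n+1) div 2" and "N = real n"
  have L_iff: "j < L \<longleftrightarrow> 10 * j < n" and T_iff: "j < T \<longleftrightarrow> 2 * j < n" for j
    using less_ceiling_div_iff[of 10 j n] less_ceiling_div_iff[of 2 j n] by (simp_all add: L_def T_def add.commute)
  have N: "100 \<le> N" and L: "N \<le> 10 * real L" and T: "2 * real T \<le> N + 1"
    using assms L_iff[of L] T_iff[of "T - 1"] T_iff[of 0] by (simp_all add: N_def)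
  have "L \<le> T" using L_iff[of T] T_iff[of T] by linarith
  then have LT: "real L \<le> real T" by simp
  have "(\<Sum>j=L..<T. N\<^sup>2 / (2 * real j * (N - real j)))
      \<le> (\<Sum>j=L..<T. N / 2 * (1 / real j + 1 / (N - real j)))"
  proof (intro sum_mono)
    fix j assume "j \<in> {L..<T}"
    then have "N \<le> 10 * real j" "2 * real j < N" using L_iff[of j] T_iff[of j] by (auto simp: N_def)
    then show "N\<^sup>2 / (2 * real j * (N - real j)) \<le> N / 2 * (1 / real j + 1 / (N - real j))"
      using N by (intro sq_div_le_half_sum_inverse) auto
  qed
  also have "\<dots> = N / 2 * ((\<Sum>j=L..<T. 1 / (real j + 0)) + (\<Sum>j=L..<T. 1 / (N - real j)))"
    by (simp only: sum_distrib_left[symmetric] sum.distrib[symmetric] add_0_right)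
  also have "\<dots> \<le> N / 2 * ((ln (real T - 1) - ln (real L - 1)) + (ln (N - real L) - ln (N - real T)))"
    using sum_inverse_le_ln[OF \<open>L \<le> T\<close>, of 0] sum_inverse_diff_le_ln[OF \<open>L \<le> T\<close>, of N] L T N
    by (intro mult_left_mono add_mono) auto
  also have "\<dots> \<le> N / 2 * ln 10"
  proof (intro mult_left_mono)
    have "(real T - 1) * (N - real L) \<le> ((N - 1) / 2) * (N - 10)"
      using L T N LT by (intro mult_mono) auto
    also have "\<dots> \<le> 10 * ((real L - 1) * (N - real T))"
      using mult_mono[of "(N - 1) / 2" "N - real T" "N - 10" "10 * (real L - 1)"] L T N
      by (simp add: mult_ac)
    finally have "ln ((real T - 1) * (N - real L)) - ln ((real L - 1) * (N - real T)) \<le> ln 10"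
      using L T N LT by (intro ln_diff_le_ln_ratio) auto
    then show "ln (real T - 1) - ln (real L - 1) + (ln (N - real L) - ln (N - real T)) \<le> ln 10"
      using L T N LT by (simp add: ln_mult_pos)
  qed (use N in simp)
  finally show ?thesis by (simp add: L_def T_def N_def epidemic_phase_time_def)
qed

lemma drip_sum_le:
  fixes p :: real
  assumes "100 \<le> n" "0 < p"
  shows "(\<Sum>j=0..<(n+9) div 10. real n ^ 2 / (2 * (real j + p * real n / 16) * (real n - real j)))
    \<le> drip_phase_time n p"
proof -
  define T N c where "T = (n+9) div 10" and "N = real n" and "c = p * real n / 16"
  have T_iff: "j < T \<longleftrightarrow> 10 * j < n" for j
    using less_ceiling_div_iff[of 10 j n] by (simp add: T_def add.commute)
  have N: "100 \<le> N" and c: "0 < c" and T: "1 \<le> T" "10 * (real T - 1) + 1 \<le> N"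
    using assms T_iff[of 0] T_iff[of "T - 1"] by (auto simp: N_def c_def)
  have "(\<Sum>j=0..<T. N\<^sup>2 / (2 * (real j + c) * (N - real j)))
      \<le> (\<Sum>j=0..<T. N / 2 * (1 / (real j + c) + 1 / (N - real j)))"
  proof (intro sum_mono)
    fix j assume "j \<in> {0..<T}"
    then have "10 * real j + 1 \<le> N" using T_iff[of j] by (simp add: N_def)
    then show "N\<^sup>2 / (2 * (real j + c) * (N - real j)) \<le> N / 2 * (1 / (real j + c) + 1 / (N - real j))"
      using c N by (intro sq_div_le_half_sum_inverse) auto
  qed
  also have "\<dots> = N / 2 * ((\<Sum>j=0..<T. 1 / (real j + c)) + (\<Sum>j=0..<T. 1 / (N - real j)))"
    by (simp only: sum_distrib_left[symmetric] sum.distrib[symmetric])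
  also have "\<dots> \<le> N / 2 * ((1 / c + ln (1 + (real T - 1) / c)) + (ln N - ln (N - real T)))"
    using sum_inverse_shift_le_ln[OF c T(1)] sum_inverse_diff_le_ln[of 0 T N] T N
    by (intro mult_left_mono add_mono) auto
  also have "\<dots> \<le> N / 2 * ((1 / c + ln (1 + 8 / (5 * p))) + ln (6/5))"
  proof (intro mult_left_mono add_mono order.refl)
    have "(real T - 1) / c \<le> (N / 10) / c" using T c by (intro divide_right_mono) auto
    also have "\<dots> = 8 / (5 * p)" using N assms by (simp add: c_def N_def field_simps)
    finally show "ln (1 + (real T - 1) / c) \<le> ln (1 + 8 / (5 * p))"
      using T c assms by (subst ln_le_cancel_iff) (auto intro: add_pos_nonneg)
    show "ln N - ln (N - real T) \<le> ln (6/5)"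
      using T N by (intro ln_diff_le_ln_ratio) auto
  qed (use N in simp)
  also have "\<dots> = drip_phase_time n p"
    using assms N by (simp add: drip_phase_time_def c_def N_def field_simps)
  finally show ?thesis by (simp add: T_def N_def c_def)
qed

lemma epidemic_phase_tail_le:
  fixes p :: real
  assumes n: "200 \<le> n" and p: "0 \<le> p" "p \<le> 1" and s0: "frac_ge n i s0" and "0 < \<eta>"
    and m: "(1 + \<eta>) * epidemic_phase_time n \<le> real m"
  shows "emeasure (kernel_iter (step n p) m s0) {s. 2 * count_ge n i s < n}
    \<le> ennreal (exp (- real m * \<eta>\<^sup>2 / (4 * (1 + \<eta>)\<^sup>2 * 10)))"
proof -
  define L T N where "L = (n+9) div 10" and "T = (n+1) div 2" and "N = real n"
  define d where "d j = N\<^sup>2 / (2 * real j * (N - real j))" for j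
  have L_iff: "j < L \<longleftrightarrow> 10 * j < n" and T_iff: "j < T \<longleftrightarrow> 2 * j < n" for j
    using less_ceiling_div_iff[of 10 j n] less_ceiling_div_iff[of 2 j n]
    by (simp_all add: L_def T_def add.commute)
  have "{s. 2 * count_ge n i s < n} = {s. count_ge n i s < T}" using T_iff by auto
  moreover have "emeasure (kernel_iter (step n p) m s0) {s. count_ge n i s < T}
      \<le> ennreal (exp (- real m * \<eta>\<^sup>2 / (4 * (1 + \<eta>)\<^sup>2 * 10)))"
  proof (rule kernel_iter_level_hitting_tail[where S = "{s. L \<le> count_ge n i s}" and L = L and d = d])
    show "set_pmf (step n p s) \<subseteq> {s. L \<le> count_ge n i s}" if "s \<in> {s. L \<le> count_ge n i s}" for s
      using that count_ge_step_mono by (auto intro: order_trans)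
    show "s0 \<in> {s. L \<le> count_ge n i s}"
      using s0 L_iff[of "count_ge n i s0"] by (simp add: frac_ge_iff_count_ge)
    show "0 < d j \<and> d j \<le> 10" if "L \<le> j" "j < T" for j
    proof -
      have j: "N \<le> 10 * real j" "2 * real j + 1 \<le> N" "200 \<le> N"
        using that L_iff[of j] T_iff[of j] n by (auto simp: N_def)
      then have "N * N \<le> 10 * real j * (2 * (N - real j))" by (intro mult_mono) auto
      then show ?thesis using j by (auto simp: d_def field_simps power2_eq_square)
    qed
    show "1 / d (count_ge n i s) \<le> measure_pmf.prob (step n p s) {s'. count_ge n i s < count_ge n i s'}"
      for s
      using prob_step_epidemic_ge[of n p i s] n p by (simp add: d_def N_def)
    have "(1 + \<eta>) * (\<Sum>j=L..<T. d j) \<le> (1 + \<eta>) * epidemic_phase_time n"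
      using epidemic_sum_le[of n] n \<open>0 < \<eta>\<close> by (intro mult_left_mono) (simp_all add: L_def T_def N_def d_def)
    then show "(1 + \<eta>) * (\<Sum>j=L..<T. d j) \<le> real m" using m by simp
  qed (use count_ge_step_mono \<open>0 < \<eta>\<close> in auto)
  ultimately show ?thesis by simp
qed

lemma drip_phase_tail_le:
  fixes p :: real
  assumes n: "200 \<le> n" and p: "0 < p" "p \<le> 1" and s0: "n \<le> 2 * count_ge n i s0" and "0 < \<eta>"
    and m: "(1 + \<eta>) * drip_phase_time n p \<le> real m"
  shows "emeasure (kernel_iter (step n p) m s0) {s. 10 * count_ge n (Suc i) s < n}
    \<le> ennreal (exp (- real m * \<eta>\<^sup>2 / (4 * (1 + \<eta>)\<^sup>2 * (9 / p))))"
proof -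
  define T N c where "T = (n+9) div 10" and "N = real n" and "c = p * real n / 16"
  define d where "d j = N\<^sup>2 / (2 * (real j + c) * (N - real j))" for j
  have T_iff: "j < T \<longleftrightarrow> 10 * j < n" for j
    using less_ceiling_div_iff[of 10 j n] by (simp add: T_def add.commute)
  have "{s. 10 * count_ge n (Suc i) s < n} = {s. count_ge n (Suc i) s < T}" using T_iff by auto
  moreover have "emeasure (kernel_iter (step n p) m s0) {s. count_ge n (Suc i) s < T}
      \<le> ennreal (exp (- real m * \<eta>\<^sup>2 / (4 * (1 + \<eta>)\<^sup>2 * (9 / p))))"
  proof (rule kernel_iter_level_hitting_tail[where S = "{s. n \<le> 2 * count_ge n i s}" and L = 0 and d = d])
    show "set_pmf (step n p s) \<subseteq> {s. n \<le> 2 * count_ge n i s}" if "s \<in> {s. n \<le> 2 * count_ge n i s}" for s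
      using that count_ge_step_mono by (auto intro: order_trans)
    show "0 < d j \<and> d j \<le> 9 / p" if "0 \<le> j" "j < T" for j
    proof -
      have j: "10 * real j + 1 \<le> N" "200 \<le> N" using \<open>j < T\<close> T_iff[of j] n by (auto simp: N_def)
      have "p * N / 8 * (9 * N / 10) \<le> 2 * (real j + c) * (N - real j)"
        using j p by (intro mult_mono) (auto simp: c_def N_def)
      then have "9 * (p * N\<^sup>2) \<le> 80 * (2 * (real j + c) * (N - real j))"
        by (simp add: power2_eq_square algebra_simps)
      moreover have "0 < c" using n p by (simp add: c_def)
      then have X: "0 < 2 * (real j + c) * (N - real j)" using j by (intro mult_pos_pos) (auto simp: N_def)
      ultimately have "N\<^sup>2 * p \<le> 9 * (2 * (real j + c) * (N - real j))" by (simp add: mult.commute)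
      then show ?thesis using X j p by (simp add: d_def divide_simps)
    qed
    show "1 / d (count_ge n (Suc i) s)
        \<le> measure_pmf.prob (step n p s) {s'. count_ge n (Suc i) s < count_ge n (Suc i) s'}"
      if "s \<in> {s. n \<le> 2 * count_ge n i s}" "count_ge n (Suc i) s < T" for s
      using prob_step_drip_ge[OF n p, of i s] that T_iff by (simp add: d_def N_def c_def)
    have "(1 + \<eta>) * (\<Sum>j=0..<T. d j) \<le> (1 + \<eta>) * drip_phase_time n p"
      using drip_sum_le[of n p] n p \<open>0 < \<eta>\<close>
      by (intro mult_left_mono) (simp_all add: T_def N_def d_def c_def)
    then show "(1 + \<eta>) * (\<Sum>j=0..<T. d j) \<le> real m" using m by simp
  qed (use count_ge_step_mono \<open>0 < \<eta>\<close> s0 p in auto)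
  ultimately show ?thesis by simp
qed

lemma frac_ge_Suc_tail_le:
  fixes p :: real
  assumes n: "200 \<le> n" and p: "0 < p" "p \<le> 1" and "0 < \<eta>" and s0: "frac_ge n i s0"
    and mA: "(1 + \<eta>) * epidemic_phase_time n \<le> real mA"
    and mB: "(1 + \<eta>) * drip_phase_time n p \<le> real mB"
  shows "emeasure (kernel_iter (step n p) (mA + mB) s0) {s. \<not> frac_ge n (Suc i) s}
    \<le> ennreal (exp (- real mA * \<eta>\<^sup>2 / (4 * (1 + \<eta>)\<^sup>2 * 10))
        + exp (- real mB * \<eta>\<^sup>2 / (4 * (1 + \<eta>)\<^sup>2 * (9 / p))))"
proof -
  define eA eB where "eA = exp (- real mA * \<eta>\<^sup>2 / (4 * (1 + \<eta>)\<^sup>2 * 10))"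
    and "eB = exp (- real mB * \<eta>\<^sup>2 / (4 * (1 + \<eta>)\<^sup>2 * (9 / p)))"
  have second_phase: "emeasure (kernel_iter (step n p) mB s) {s. \<not> frac_ge n (Suc i) s}
      \<le> indicator {s. 2 * count_ge n i s < n} s + ennreal eB" for s
  proof (cases "2 * count_ge n i s < n")
    case True
    then show ?thesis by (simp add: measure_pmf.emeasure_le_1 add_increasing2)
  next
    case False
    then have "emeasure (kernel_iter (step n p) mB s) {s. \<not> frac_ge n (Suc i) s} \<le> ennreal eB"
      using drip_phase_tail_le[OF n p _ \<open>0 < \<eta>\<close> mB, of i s]
      by (simp add: eB_def frac_ge_iff_count_ge not_le)
    then show ?thesis by (simp add: False)
  qed
  have "emeasure (kernel_iter (step n p) (mA + mB) s0) {s. \<not> frac_ge n (Suc i) s}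
      = (\<integral>\<^sup>+s. emeasure (kernel_iter (step n p) mB s) {s. \<not> frac_ge n (Suc i) s} \<partial>kernel_iter (step n p) mA s0)"
    by (simp add: kernel_iter_add)
  also have "\<dots> \<le> (\<integral>\<^sup>+s. indicator {s. 2 * count_ge n i s < n} s + ennreal eB \<partial>kernel_iter (step n p) mA s0)"
    by (intro nn_integral_mono second_phase)
  also have "\<dots> = emeasure (kernel_iter (step n p) mA s0) {s. 2 * count_ge n i s < n} + ennreal eB"
    by (subst nn_integral_add) (auto simp: measure_pmf.emeasure_space_1)
  also have "\<dots> \<le> ennreal eA + ennreal eB"
    using epidemic_phase_tail_le[OF n _ _ s0 \<open>0 < \<eta>\<close> mA] p
    by (intro add_right_mono) (simp add: eA_def)
  finally show ?thesis by (simp add: eA_def eB_def ennreal_plus)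
qed

section \<open>Trajectories and first hitting times\<close>

lemma run_length: "xs \<in> set_pmf (run n p k) \<Longrightarrow> length xs = Suc k"
  by (induction k arbitrary: xs) auto

lemma map_pmf_take_run: "j \<le> K \<Longrightarrow> map_pmf (take (Suc j)) (run n p K) = run n p j"
proof (induction K)
  case (Suc K)
  show ?case
  proof (cases "j = Suc K")
    case True
    show ?thesis unfolding True by (intro map_pmf_idI) (simp add: run_length del: run.simps)
  next
    case False
    then have "j \<le> K" using Suc.prems by simp
    have "map_pmf (take (Suc j)) (run n p (Suc K)) = run n p K \<bind> (\<lambda>xs. return_pmf (take (Suc j) xs))"
      using \<open>j \<le> K\<close> by (simp add: map_bind_pmf run_length cong: bind_pmf_cong)
    also have "\<dots> = run n p j"
      using Suc.IH[OF \<open>j \<le> K\<close>] by (simp add: map_pmf_def)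
    finally show ?thesis .
  qed
qed simp

lemma map_pmf_run_markov:
  "map_pmf (\<lambda>xs. (take (Suc k) xs, last xs)) (run n p (k + j))
    = run n p k \<bind> (\<lambda>xs. map_pmf (Pair xs) (kernel_iter (step n p) j (last xs)))"
proof (induction j)
  case 0
  show ?case
    by (simp add: map_pmf_def bind_return_pmf run_length cong: bind_pmf_cong)
next
  case (Suc j)
  have "map_pmf (\<lambda>xs. (take (Suc k) xs, last xs)) (run n p (k + Suc j))
      = run n p (k + j) \<bind> (\<lambda>xs. map_pmf (Pair (take (Suc k) xs)) (step n p (last xs)))"
    by (simp add: map_bind_pmf map_pmf_comp run_length map_pmf_def[symmetric] cong: bind_pmf_cong)
  also have "\<dots> = map_pmf (\<lambda>xs. (take (Suc k) xs, last xs)) (run n p (k + j))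
      \<bind> (\<lambda>(h, s). map_pmf (Pair h) (step n p s))"
    by (simp add: bind_map_pmf)
  also have "\<dots> = run n p k \<bind> (\<lambda>xs. map_pmf (Pair xs) (kernel_iter (step n p) (Suc j) (last xs)))"
    by (simp add: Suc.IH bind_assoc_pmf bind_map_pmf map_bind_pmf)
  finally show ?case .
qed

lemma emeasure_run_markov:
  assumes "k + j \<le> K"
  shows "emeasure (run n p K) {xs. P (take (Suc k) xs) \<and> xs ! (k + j) \<in> A}
    = (\<integral>\<^sup>+xs. indicator {xs. P xs} xs * emeasure (kernel_iter (step n p) j (last xs)) A \<partial>run n p k)"
proof -
  have "emeasure (run n p K) {xs. P (take (Suc k) xs) \<and> xs ! (k + j) \<in> A}
      = emeasure (map_pmf (take (Suc (k + j))) (run n p K)) {xs. P (take (Suc k) xs) \<and> last xs \<in> A}"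
    using assms by (auto intro!: emeasure_eq_AE simp: AE_measure_pmf_iff run_length
        take_Suc_conv_app_nth min_def)
  also have "\<dots> = emeasure (map_pmf (\<lambda>xs. (take (Suc k) xs, last xs)) (run n p (k + j)))
      {(h, s). P h \<and> s \<in> A}"
    using assms by (simp add: map_pmf_take_run vimage_def)
  also have "\<dots> = (\<integral>\<^sup>+xs. indicator {xs. P xs} xs * emeasure (kernel_iter (step n p) j (last xs)) A \<partial>run n p k)"
    unfolding map_pmf_run_markov emeasure_bind_pmf
    by (intro nn_integral_cong) (simp add: vimage_def indicator_def)
  finally show ?thesis .
qed

lemma first_hit_take_Suc: "first_hit n i (take (Suc k) xs) k \<longleftrightarrow> first_hit n i xs k"
  by (auto simp: first_hit_def)

lemma first_hit_unique: "first_hit n i xs k \<Longrightarrow> first_hit n i xs k' \<Longrightarrow> k = k'"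
  by (metis first_hit_def linorder_neqE_nat)

lemma emeasure_run_first_hit:
  assumes "k + j \<le> K"
  shows "emeasure (run n p K) {xs. first_hit n i xs k \<and> xs ! (k + j) \<in> A}
    = (\<integral>\<^sup>+xs. indicator {xs. first_hit n i xs k} xs * emeasure (kernel_iter (step n p) j (last xs)) A \<partial>run n p k)"
  using emeasure_run_markov[OF assms, of n p "\<lambda>xs. first_hit n i xs k"] by (simp add: first_hit_take_Suc)

lemma emeasure_first_hit_then_le:
  assumes bound: "\<And>s. frac_ge n i s \<Longrightarrow> emeasure (kernel_iter (step n p) M s) A \<le> ennreal \<epsilon>"
    and "k + M \<le> K"
  shows "emeasure (run n p K) {xs. first_hit n i xs k \<and> xs ! (k + M) \<in> A}
    \<le> ennreal \<epsilon> * emeasure (run n p K) {xs. first_hit n i xs k}"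
proof -
  have "emeasure (run n p K) {xs. first_hit n i xs k \<and> xs ! (k + M) \<in> A}
      \<le> (\<integral>\<^sup>+xs. indicator {xs. first_hit n i xs k} xs * ennreal \<epsilon> \<partial>run n p k)"
    unfolding emeasure_run_first_hit[OF assms(2)]
  proof (intro nn_integral_mono_AE, unfold AE_measure_pmf_iff, intro ballI)
    fix xs assume "xs \<in> set_pmf (run n p k)"
    then have "length xs = Suc k" by (rule run_length)
    then have "last xs = xs ! k" by (cases xs rule: rev_cases) (auto simp: nth_append)
    then show "indicator {xs. first_hit n i xs k} xs * emeasure (kernel_iter (step n p) M (last xs)) A
        \<le> indicator {xs. first_hit n i xs k} xs * ennreal \<epsilon>"
      using bound by (auto simp: first_hit_def indicator_def)
  qed
  also have "\<dots> = ennreal \<epsilon> * emeasure (run n p k) {xs. first_hit n i xs k}"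
    by (simp add: nn_integral_cmult_indicator mult.commute)
  also have "emeasure (run n p k) {xs. first_hit n i xs k} = emeasure (run n p K) {xs. first_hit n i xs k}"
    using emeasure_run_first_hit[of k 0 K n p i UNIV] assms(2) by simp
  finally show ?thesis .
qed

lemma gap_fail_imp_first_hit:
  assumes "gap_fail n i c N xs" "length xs = Suc (horizon n c N)" "real M \<le> c * real n"
  shows "\<exists>k\<le>N. first_hit n i xs k \<and> \<not> frac_ge n (Suc i) (xs ! (k + M))"
proof -
  obtain k where k: "k \<le> N" "first_hit n i xs k" and no_hit:
      "\<not> (\<exists>k'. k' < length xs \<and> real k' \<le> real k + c * real n \<and> frac_ge n (Suc i) (xs ! k'))"
    using assms(1) by (auto simp: gap_fail_def)
  have "k + M < length xs"
    using k(1) assms(2,3) by (simp add: horizon_def le_nat_iff) linarith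
  then show ?thesis using k no_hit assms(3) by auto
qed

lemma prob_gap_fail_le:
  assumes bound: "\<And>s. frac_ge n i s \<Longrightarrow>
      emeasure (kernel_iter (step n p) M s) {s'. \<not> frac_ge n (Suc i) s'} \<le> ennreal \<epsilon>"
    and M: "real M \<le> c * real n" and "0 \<le> \<epsilon>"
  shows "measure_pmf.prob (run n p (horizon n c N)) {xs. gap_fail n i c N xs} \<le> \<epsilon>"
proof -
  define K A where "K = horizon n c N" and "A = {s. \<not> frac_ge n (Suc i) s}"
  define F where "F k = {xs. first_hit n i xs k}" for k
  define E where "E k = {xs. first_hit n i xs k \<and> xs ! (k + M) \<in> A}" for k
  have "{xs. gap_fail n i c N xs} \<inter> set_pmf (run n p K) \<subseteq> (\<Union>k\<le>N. E k)"
    using gap_fail_imp_first_hit[OF _ _ M] run_length by (fastforce simp: E_def A_def K_def)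
  then have "emeasure (run n p K) {xs. gap_fail n i c N xs} \<le> emeasure (run n p K) (\<Union>k\<le>N. E k)"
    by (subst emeasure_Int_set_pmf[symmetric]) (rule emeasure_mono, auto)
  also have "\<dots> \<le> (\<Sum>k\<le>N. emeasure (run n p K) (E k))"
    by (rule emeasure_subadditive_finite) auto
  also have "\<dots> \<le> (\<Sum>k\<le>N. ennreal \<epsilon> * emeasure (run n p K) (F k))"
  proof (intro sum_mono)
    fix k assume "k \<in> {..N}"
    then have "k + M \<le> K" using M by (simp add: K_def horizon_def le_nat_iff) linarith
    then show "emeasure (run n p K) (E k) \<le> ennreal \<epsilon> * emeasure (run n p K) (F k)"
      unfolding E_def F_def A_def using bound by (rule emeasure_first_hit_then_le[rotated])
  qed
  also have "\<dots> = ennreal \<epsilon> * emeasure (run n p K) (\<Union>k\<le>N. F k)"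
  proof -
    have "disjoint_family_on F {..N}"
      using first_hit_unique by (auto simp: disjoint_family_on_def F_def)
    then show ?thesis by (simp add: sum_distrib_left[symmetric] sum_emeasure)
  qed
  also have "\<dots> \<le> ennreal \<epsilon>"
    using mult_left_mono[OF measure_pmf.emeasure_le_1, of "ennreal \<epsilon>"] by simp
  finally show ?thesis
    using \<open>0 \<le> \<epsilon>\<close> by (simp add: K_def measure_pmf.emeasure_eq_measure)
qed

section \<open>Choice of the constants\<close>

lemma ln_156_5_le: "ln (156/5 :: real) \<le> 39/10"
proof -
  have "(156/5 :: real) \<le> (1 + 39/160) ^ 16"
    by (simp add: power_divide)
  also have "\<dots> \<le> exp (39/160) ^ 16"
    using exp_ge_add_one_self[of "39/160 :: real"] by (intro power_mono) auto
  also have "\<dots> = exp (39/10)"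
    by (simp flip: exp_of_nat_mult)
  finally have "ln (156/5) \<le> ln (exp (39/10 :: real))"
    by (subst ln_le_cancel_iff) auto
  then show ?thesis by simp
qed

lemma half_le_ln_one_plus:
  fixes x :: real
  assumes "1 \<le> x"
  shows "1/2 \<le> ln (1 + x)"
proof -
  have "1/2 \<le> x / (1 + x)" using assms by (simp add: field_simps)
  also have "\<dots> \<le> ln (1 + x)" using ln_add1_ge[of x] assms by (simp add: add.commute)
  finally show ?thesis .
qed

lemma phase_times_ge:
  fixes p :: real
  assumes "0 < p" "p \<le> 1"
  shows "real n / 4 \<le> epidemic_phase_time n" and "real n / 4 \<le> drip_phase_time n p"
proof -
  have "1/2 \<le> ln (10 :: real)" using half_le_ln_one_plus[of 9] by simp
  then show "real n / 4 \<le> epidemic_phase_time n"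
    using mult_left_mono[of "1/2" "ln 10" "real n / 2"] by (simp add: epidemic_phase_time_def)
  have "1/2 \<le> ln (1 + 8 / (5 * p))"
    using assms by (intro half_le_ln_one_plus) (simp add: field_simps)
  moreover have "0 \<le> ln (6/5 :: real)" "0 \<le> 8 / p" using assms by simp_all
  ultimately have "1/2 \<le> ln (6/5) + ln (1 + 8 / (5 * p))" "0 \<le> 8 / p" by linarith+
  moreover from this(1) have "real n / 2 * (1/2) \<le> real n / 2 * (ln (6/5) + ln (1 + 8 / (5 * p)))"
    by (rule mult_left_mono) simp
  ultimately show "real n / 4 \<le> drip_phase_time n p"
    unfolding drip_phase_time_def by linarith
qed

lemma phase_times_le:
  fixes p :: real
  assumes "0 < p" "p \<le> 1"
  shows "epidemic_phase_time n + drip_phase_time n p \<le> real n / 2 * (39/10 + ln (1 / p)) + 8 / p"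
proof -
  have "ln 10 + (ln (6/5) + ln (1 + 8 / (5 * p))) = ln (12 * (1 + 8 / (5 * p)))"
    using assms by (simp add: ln_mult_pos[symmetric] add_pos_pos)
  also have "\<dots> \<le> ln (156/5 * (1 / p))"
    using assms by (subst ln_le_cancel_iff) (auto simp: field_simps add_pos_pos)
  also have "\<dots> = ln (156/5) + ln (1 / p)"
    using assms by (intro ln_mult_pos) auto
  finally have "ln 10 + (ln (6/5) + ln (1 + 8 / (5 * p))) \<le> 39/10 + ln (1 / p)"
    using ln_156_5_le by linarith
  then have "real n / 2 * (ln 10 + (ln (6/5) + ln (1 + 8 / (5 * p)))) \<le> real n / 2 * (39/10 + ln (1 / p))"
    by (rule mult_left_mono) simp
  then show ?thesis
    by (simp add: epidemic_phase_time_def drip_phase_time_def distrib_left)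
qed

lemma phase_lengths_le:
  fixes p \<eta> :: real
  assumes p: "0 < p" "p \<le> 1" and n: "20 * (16 / p + 2) \<le> real n"
    and \<eta>: "\<eta> = 1 / (5 * (39/10 + ln (1 / p)))"
  shows "real (nat \<lceil>(1 + \<eta>) * epidemic_phase_time n\<rceil> + nat \<lceil>(1 + \<eta>) * drip_phase_time n p\<rceil>)
    \<le> (211/100 + ln (1 / p) / 2) * real n"
proof -
  define Lp where "Lp = ln (1 / p)"
  have Lp: "0 \<le> Lp" using p by (simp add: Lp_def)
  have \<eta>1: "0 \<le> \<eta>" "\<eta> \<le> 1" using Lp by (auto simp: \<eta> Lp_def[symmetric] field_simps)
  have "0 \<le> (1 + \<eta>) * epidemic_phase_time n" "0 \<le> (1 + \<eta>) * drip_phase_time n p"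
    using phase_times_ge[OF p, of n] \<eta>1 by (auto intro!: mult_nonneg_nonneg order_trans[rotated])
  then have "real (nat \<lceil>(1 + \<eta>) * epidemic_phase_time n\<rceil> + nat \<lceil>(1 + \<eta>) * drip_phase_time n p\<rceil>)
      \<le> (1 + \<eta>) * (epidemic_phase_time n + drip_phase_time n p) + 2"
    by (simp add: distrib_left) linarith
  also have "\<dots> \<le> (1 + \<eta>) * (real n / 2 * (39/10 + Lp) + 8 / p) + 2"
    using phase_times_le[OF p] \<eta>1 by (intro add_right_mono mult_left_mono) (auto simp: Lp_def)
  also have "\<dots> = real n / 2 * (39/10 + Lp) + real n / 10 + (1 + \<eta>) * (8 / p) + 2"
  proof -
    have "\<eta> * (real n / 2 * (39/10 + Lp)) = real n / 10"
      using Lp by (simp add: \<eta> Lp_def[symmetric] field_simps)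
    moreover have "(1 + \<eta>) * (X + 8 / p) + 2 = X + \<eta> * X + (1 + \<eta>) * (8 / p) + 2" for X
      by (simp add: algebra_simps)
    ultimately show ?thesis by (metis add.assoc)
  qed
  also have "\<dots> \<le> real n / 2 * (39/10 + Lp) + real n / 10 + 2 * (8 / p) + 2"
    using \<eta>1 p by (intro add_right_mono add_left_mono mult_right_mono) auto
  also have "\<dots> \<le> (211/100 + Lp / 2) * real n"
    using n by (simp add: algebra_simps)
  finally show ?thesis by (simp add: Lp_def)
qed

lemma exp_phase_tail_le:
  fixes p D \<eta> :: real
  assumes "real n / 4 \<le> real m" "0 < D" "D \<le> 10 / p" "0 < p"
  shows "exp (- real m * \<eta>\<^sup>2 / (4 * (1 + \<eta>)\<^sup>2 * D)) \<le> exp (- (\<eta>\<^sup>2 * p / (160 * (1 + \<eta>)\<^sup>2)) * real n)"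
proof -
  have "real n * p / 160 \<le> real m * p / 40" using assms by (simp add: field_simps)
  also have "\<dots> \<le> real m / (4 * D)"
  proof -
    have "D * p * real m \<le> 10 * real m" using assms by (intro mult_right_mono) (auto simp: field_simps)
    then show ?thesis using assms by (simp add: field_simps)
  qed
  finally have "real n * p / 160 * (\<eta>\<^sup>2 / (1 + \<eta>)\<^sup>2) \<le> real m / (4 * D) * (\<eta>\<^sup>2 / (1 + \<eta>)\<^sup>2)"
    by (rule mult_right_mono) simp
  then show ?thesis by (simp add: field_simps)
qed

lemma frac_ge_Suc_window_tail_le:
  fixes p \<eta> :: real
  assumes n: "200 \<le> n" and p: "0 < p" "p \<le> 1" and "0 < \<eta>" and "frac_ge n i s"
  defines "M \<equiv> nat \<lceil>(1 + \<eta>) * epidemic_phase_time n\<rceil> + nat \<lceil>(1 + \<eta>) * drip_phase_time n p\<rceil>"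
  shows "emeasure (kernel_iter (step n p) M s) {s'. \<not> frac_ge n (Suc i) s'}
    \<le> ennreal (2 * exp (- (\<eta>\<^sup>2 * p / (160 * (1 + \<eta>)\<^sup>2)) * real n))"
proof -
  define mA mB where "mA = nat \<lceil>(1 + \<eta>) * epidemic_phase_time n\<rceil>"
    and "mB = nat \<lceil>(1 + \<eta>) * drip_phase_time n p\<rceil>"
  have m: "(1 + \<eta>) * epidemic_phase_time n \<le> real mA" "(1 + \<eta>) * drip_phase_time n p \<le> real mB"
    unfolding mA_def mB_def by (rule real_nat_ceiling_ge)+
  have "x \<le> (1 + \<eta>) * x" if "0 \<le> x" for x
    using that \<open>0 < \<eta>\<close> by (simp add: algebra_simps)
  then have m4: "real n / 4 \<le> real mA" "real n / 4 \<le> real mB"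
    using m phase_times_ge[OF p, of n] by (smt (verit) of_nat_0_le_iff divide_nonneg_nonneg)+
  have "emeasure (kernel_iter (step n p) (mA + mB) s) {s'. \<not> frac_ge n (Suc i) s'}
      \<le> ennreal (exp (- real mA * \<eta>\<^sup>2 / (4 * (1 + \<eta>)\<^sup>2 * 10))
        + exp (- real mB * \<eta>\<^sup>2 / (4 * (1 + \<eta>)\<^sup>2 * (9 / p))))"
    using m \<open>frac_ge n i s\<close> by (intro frac_ge_Suc_tail_le[OF n p \<open>0 < \<eta>\<close>])
  also have "\<dots> \<le> ennreal (2 * exp (- (\<eta>\<^sup>2 * p / (160 * (1 + \<eta>)\<^sup>2)) * real n))"
  proof (rule ennreal_leI)
    have "exp (- real mA * \<eta>\<^sup>2 / (4 * (1 + \<eta>)\<^sup>2 * 10))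
        \<le> exp (- (\<eta>\<^sup>2 * p / (160 * (1 + \<eta>)\<^sup>2)) * real n)"
      by (rule exp_phase_tail_le[OF m4(1)]) (use p in \<open>auto simp: field_simps\<close>)
    moreover have "exp (- real mB * \<eta>\<^sup>2 / (4 * (1 + \<eta>)\<^sup>2 * (9 / p)))
        \<le> exp (- (\<eta>\<^sup>2 * p / (160 * (1 + \<eta>)\<^sup>2)) * real n)"
      by (rule exp_phase_tail_le[OF m4(2)]) (use p in \<open>auto simp: field_simps\<close>)
    ultimately show "exp (- real mA * \<eta>\<^sup>2 / (4 * (1 + \<eta>)\<^sup>2 * 10))
        + exp (- real mB * \<eta>\<^sup>2 / (4 * (1 + \<eta>)\<^sup>2 * (9 / p)))
        \<le> 2 * exp (- (\<eta>\<^sup>2 * p / (160 * (1 + \<eta>)\<^sup>2)) * real n)" by linarith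
  qed
  finally show ?thesis by (simp add: M_def mA_def mB_def)
qed

lemma exists_gap_tail_bound:
  fixes p :: real
  assumes p: "0 < p" "p \<le> 1"
  obtains \<kappa> n0 where "0 < \<kappa>"
    and "\<And>n i. n0 \<le> n \<Longrightarrow> \<exists>M. real M \<le> (211/100 + ln (1 / p) / 2) * real n \<and>
      (\<forall>s. frac_ge n i s \<longrightarrow>
        emeasure (kernel_iter (step n p) M s) {s'. \<not> frac_ge n (Suc i) s'} \<le> ennreal (2 * exp (- \<kappa> * real n)))"
proof
  \<comment> \<open>chosen so that the slack \<open>\<eta> (n/2) (39/10 + ln (1/p))\<close> of the two phases is \<open>n / 10\<close>\<close>
  define \<eta> where "\<eta> = 1 / (5 * (39/10 + ln (1 / p)))"
  have "0 < \<eta>" using p by (simp add: \<eta>_def add_pos_nonneg)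
  then show "0 < \<eta>\<^sup>2 * p / (160 * (1 + \<eta>)\<^sup>2)"
    using p by simp
  fix n i assume n: "max 200 (nat \<lceil>20 * (16 / p + 2)\<rceil>) \<le> n"
  then have "200 \<le> n" and "nat \<lceil>20 * (16 / p + 2)\<rceil> \<le> n" by simp_all
  from this(2) have "20 * (16 / p + 2) \<le> real n" by linarith
  show "\<exists>M. real M \<le> (211/100 + ln (1 / p) / 2) * real n \<and>
      (\<forall>s. frac_ge n i s \<longrightarrow> emeasure (kernel_iter (step n p) M s) {s'. \<not> frac_ge n (Suc i) s'}
        \<le> ennreal (2 * exp (- (\<eta>\<^sup>2 * p / (160 * (1 + \<eta>)\<^sup>2)) * real n)))"
    using phase_lengths_le[OF p \<open>20 * (16 / p + 2) \<le> real n\<close> \<eta>_def]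
      frac_ge_Suc_window_tail_le[OF \<open>200 \<le> n\<close> p \<open>0 < \<eta>\<close>] by blast
qed

theorem mainTheorem2:
  fixes p :: real
  assumes "0 < p" and "p \<le> 1"
  shows "\<forall>d e :: nat. \<exists>n0. \<forall>n\<ge>n0. \<forall>i. real i \<le> real n ^ d \<longrightarrow> (\<forall>N.
           measure_pmf.prob (run n p (horizon n (211/100 + ln (1/p) / 2) N))
             {xs. gap_fail n i (211/100 + ln (1/p) / 2) N xs}
           \<le> 1 / real n ^ e)"
proof -
  define c where "c = 211/100 + ln (1/p) / 2"
  obtain \<kappa> n0 where "0 < \<kappa>" and bound: "\<And>n i. n0 \<le> n \<Longrightarrow> \<exists>M. real M \<le> c * real n \<and>
      (\<forall>s. frac_ge n i s \<longrightarrow>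
        emeasure (kernel_iter (step n p) M s) {s'. \<not> frac_ge n (Suc i) s'} \<le> ennreal (2 * exp (- \<kappa> * real n)))"
    using exists_gap_tail_bound[OF assms] unfolding c_def by blast
  have fail: "measure_pmf.prob (run n p (horizon n c N)) {xs. gap_fail n i c N xs} \<le> 2 * exp (- \<kappa> * real n)"
    if "n0 \<le> n" for n i N
    using bound[OF that, of i] by (auto intro: prob_gap_fail_le)
  have tail: "\<exists>n1. \<forall>n\<ge>n1. 2 * exp (- \<kappa> * real n) \<le> 1 / real n ^ e" for e :: nat
  proof -
    have "eventually (\<lambda>n. 2 * exp (- \<kappa> * real n) \<le> 1 / real n ^ e) at_top"
      using \<open>0 < \<kappa>\<close> by real_asymp
    then show ?thesis by (simp add: eventually_at_top_linorder)
  qed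
  \<comment> \<open>the bound is uniform in the minute \<open>i\<close>\<close>
  show ?thesis
    unfolding c_def[symmetric] using fail tail by (meson max.bounded_iff order_trans)
qed

end
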